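(* In the Reissner–Nordström spacetime with $m^2\ge q^2$ (and $m>0$), let $r_+=m+\sqrt{m^2-q^2}$. Define, for a vector field $\vec A$, $Q[\vec A]=\int_0^{2\pi}d\varphi\int_0^\pi\sin\theta\,d\theta\int_{r_+}^{\infty}(-A^t)\,r^2\,dr$ (the flux through a slice $t=\mathrm{const}$, $r>r_+$). Then $$Q_1\equiv Q[\vec j(\vec\xi_1)]=\frac{4\pi}{15\,r_+}\left(6-14\frac{m}{r_+}+14\frac{m^2}{r_+^2}-5\frac{m^3}{r_+^3}\right),$$ and, for each $a\in\{2,3,4\}$, $$Q_2\equiv Q[\vec j(\vec\xi_a,\vec\xi_a,\vec\xi_1)]=\frac{8\pi}{27}\,r_+\left(13-16\frac{m}{r_+}+16\frac{m^2}{r_+^2}\right).$$ Moreover $Q[\vec{\mathcal J}(\vec\xi_1)]=4\pi q^2/r_+$ where $\mathcal J^\alpha(\vec\xi_1)=T^{\alpha\beta}\xi_{1\beta}$ with $T^\mu{}_\nu=\frac{q^2}{r^4}\mathrm{diag}(-1,-1,1,1)$. In the Schwarzschild case $q=0$: $Q_1=\pi/(4m)$ and $Q_2=16\pi m/3$.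
   Context: The Reissner–Nordström metric is $ds^2=-f\,dt^2+f^{-1}dr^2+r^2(d\theta^2+\sin^2\theta\,d\varphi^2)$, $f=1-\frac{2m}{r}+\frac{q^2}{r^2}$, considered for $r>r_+$. Killing vectors: $\vec\xi_1=\partial_t$, $\vec\xi_2=\sin\varphi\,\partial_\theta+\cos\varphi\cot\theta\,\partial_\varphi$, $\vec\xi_3=\cos\varphi\,\partial_\theta-\sin\varphi\cot\theta\,\partial_\varphi$, $\vec\xi_4=\partial_\varphi$. The Bel tensor is $$B_{\alpha\beta\lambda\mu}= R_{\alpha\rho\lambda\sigma} R_{\beta}{}^{\rho}{}_{\mu}{}^{\sigma} +R_{\alpha\rho\mu\sigma} R_{\beta}{}^{\rho}{}_{\lambda}{}^{\sigma} -\tfrac{1}{2}g_{\alpha\beta} R_{\rho\tau\lambda\sigma}R^{\rho\tau}{}_{\mu}{}^{\sigma} -\tfrac{1}{2}g_{\lambda\mu} R_{\alpha\rho\sigma\tau}R_{\beta}{}^{\rho\sigma\tau}+ \tfrac{1}{8}g_{\alpha\beta}g_{\lambda\mu} R_{\rho\tau\sigma\nu} R^{\rho\tau\sigma\nu},$$ and the Bel current is $j_\mu(\vec\xi_1,\vec\xi_2,\vec\xi_3)=B_{(\alpha\beta\lambda)\mu}\xi_1^\alpha\xi_2^\beta\xi_3^\lambda$, $\vec j(\vec\xi)=\vec j(\vec\xi,\vec\xi,\vec\xi)$. $A^t$ denotes the $t$-component of $\vec A$ in coordinates $(t,r,\theta,\varphi)$. *)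

theory Defs
  imports "HOL-Analysis.Analysis"
begin

text \<open>Coordinates (t,r,theta,phi) are indices 0,1,2,3 of a point p :: nat => real.
  All index sums range over {..<4}.\<close>

type_synonym point = "nat \<Rightarrow> real"
type_synonym metric = "point \<Rightarrow> nat \<Rightarrow> nat \<Rightarrow> real"
type_synonym vfield = "point \<Rightarrow> nat \<Rightarrow> real"

definition pd :: "(point \<Rightarrow> real) \<Rightarrow> nat \<Rightarrow> point \<Rightarrow> real" where
  "pd F i p = deriv (\<lambda>s. F (p(i := s))) (p i)"

definition Chr :: "metric \<Rightarrow> metric \<Rightarrow> point \<Rightarrow> nat \<Rightarrow> nat \<Rightarrow> nat \<Rightarrow> real" where
  "Chr g gi p a b c =
     (\<Sum>d<4. gi p a d * (pd (\<lambda>y. g y d c) b p + pd (\<lambda>y. g y d b) c p - pd (\<lambda>y. g y b c) d p)) / 2"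

definition RiemUp :: "metric \<Rightarrow> metric \<Rightarrow> point \<Rightarrow> nat \<Rightarrow> nat \<Rightarrow> nat \<Rightarrow> nat \<Rightarrow> real" where
  "RiemUp g gi p a b c d =
     pd (\<lambda>y. Chr g gi y a d b) c p - pd (\<lambda>y. Chr g gi y a c b) d p
     + (\<Sum>e<4. Chr g gi p a c e * Chr g gi p e d b - Chr g gi p a d e * Chr g gi p e c b)"

definition Riem :: "metric \<Rightarrow> metric \<Rightarrow> point \<Rightarrow> nat \<Rightarrow> nat \<Rightarrow> nat \<Rightarrow> nat \<Rightarrow> real" where
  "Riem g gi p a b c d = (\<Sum>e<4. g p a e * RiemUp g gi p e b c d)"

definition Bel :: "metric \<Rightarrow> metric \<Rightarrow> point \<Rightarrow> nat \<Rightarrow> nat \<Rightarrow> nat \<Rightarrow> nat \<Rightarrow> real" where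
  "Bel g gi p al be la mu =
     (let R = Riem g gi p; G = g p; H = gi p in
       (\<Sum>rho<4. \<Sum>sg<4. \<Sum>k<4. \<Sum>l<4. R al rho la sg * H rho k * H sg l * R be k mu l)
     + (\<Sum>rho<4. \<Sum>sg<4. \<Sum>k<4. \<Sum>l<4. R al rho mu sg * H rho k * H sg l * R be k la l)
     - G al be / 2 * (\<Sum>rho<4. \<Sum>ta<4. \<Sum>sg<4. \<Sum>k<4. \<Sum>l<4. \<Sum>n<4.
            R rho ta la sg * H rho k * H ta l * H sg n * R k l mu n)
     - G la mu / 2 * (\<Sum>rho<4. \<Sum>sg<4. \<Sum>ta<4. \<Sum>k<4. \<Sum>l<4. \<Sum>n<4.
            R al rho sg ta * H rho k * H sg l * H ta n * R be k l n)
     + G al be * G la mu / 8 * (\<Sum>rho<4. \<Sum>ta<4. \<Sum>sg<4. \<Sum>nu<4. \<Sum>k<4. \<Sum>l<4. \<Sum>n<4. \<Sum>w<4.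
            R rho ta sg nu * H rho k * H ta l * H sg n * H nu w * R k l n w))"

definition BelCurLow :: "metric \<Rightarrow> metric \<Rightarrow> vfield \<Rightarrow> vfield \<Rightarrow> vfield \<Rightarrow> point \<Rightarrow> nat \<Rightarrow> real" where
  "BelCurLow g gi X Y Z p mu =
     (\<Sum>al<4. \<Sum>be<4. \<Sum>la<4.
        (Bel g gi p al be la mu + Bel g gi p al la be mu + Bel g gi p be al la mu
         + Bel g gi p be la al mu + Bel g gi p la al be mu + Bel g gi p la be al mu) / 6
        * X p al * Y p be * Z p la)"

definition BelCur :: "metric \<Rightarrow> metric \<Rightarrow> vfield \<Rightarrow> vfield \<Rightarrow> vfield \<Rightarrow> vfield" where
  "BelCur g gi X Y Z p al = (\<Sum>mu<4. gi p al mu * BelCurLow g gi X Y Z p mu)"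

definition fRN :: "real \<Rightarrow> real \<Rightarrow> real \<Rightarrow> real" where
  "fRN m q r = 1 - 2 * m / r + q^2 / r^2"

definition gRN :: "real \<Rightarrow> real \<Rightarrow> metric" where
  "gRN m q p a b =
     (if a \<noteq> b then 0
      else if a = 0 then - fRN m q (p 1)
      else if a = 1 then 1 / fRN m q (p 1)
      else if a = 2 then (p 1)^2
      else if a = 3 then (p 1)^2 * (sin (p 2))^2
      else 0)"

definition giRN :: "real \<Rightarrow> real \<Rightarrow> metric" where
  "giRN m q p a b =
     (if a \<noteq> b then 0
      else if a = 0 then - 1 / fRN m q (p 1)
      else if a = 1 then fRN m q (p 1)
      else if a = 2 then 1 / (p 1)^2
      else if a = 3 then 1 / ((p 1)^2 * (sin (p 2))^2)
      else 0)"

definition rplus :: "real \<Rightarrow> real \<Rightarrow> real" where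
  "rplus m q = m + sqrt (m^2 - q^2)"

definition xi1 :: vfield where "xi1 p i = (if i = 0 then 1 else 0)"
definition xi2 :: vfield where
  "xi2 p i = (if i = 2 then sin (p 3) else if i = 3 then cos (p 3) * cot (p 2) else 0)"
definition xi3 :: vfield where
  "xi3 p i = (if i = 2 then cos (p 3) else if i = 3 then - sin (p 3) * cot (p 2) else 0)"
definition xi4 :: vfield where "xi4 p i = (if i = 3 then 1 else 0)"

definition jRN :: "real \<Rightarrow> real \<Rightarrow> vfield \<Rightarrow> vfield \<Rightarrow> vfield \<Rightarrow> vfield" where
  "jRN m q X Y Z = BelCur (gRN m q) (giRN m q) X Y Z"

definition TmixRN :: "real \<Rightarrow> point \<Rightarrow> nat \<Rightarrow> nat \<Rightarrow> real" where
  "TmixRN q p a b = (if a \<noteq> b then 0 else if a \<le> 1 then - (q^2 / (p 1)^4)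
                      else if a \<le> 3 then q^2 / (p 1)^4 else 0)"

definition EMcur :: "real \<Rightarrow> real \<Rightarrow> vfield \<Rightarrow> vfield" where
  "EMcur m q X p al =
     (\<Sum>be<4. (\<Sum>nu<4. TmixRN q p al nu * giRN m q p nu be) * (\<Sum>ga<4. gRN m q p be ga * X p ga))"

definition coords :: "real \<Rightarrow> real \<Rightarrow> real \<Rightarrow> real \<Rightarrow> point" where
  "coords t r th ph = (\<lambda>i. if i = 0 then t else if i = 1 then r else if i = 2 then th else ph)"

definition Qflux :: "real \<Rightarrow> real \<Rightarrow> real \<Rightarrow> vfield \<Rightarrow> real" where
  "Qflux m q t0 A =
     (LBINT ph:{0..2*pi}. LBINT th:{0..pi}. sin th *
        (LBINT r:{rplus m q<..}. - A (coords t0 r th ph) 0 * r^2))"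

end

theory Submission
  imports Defs
begin

text \<open>
  The Reissner-Nordstrom metric is diagonal with entries depending only on r and theta, so its
  Christoffel symbols and curvature are determined by the first and second r- and theta-derivatives
  of the entries. The outcome is R_abcd = K_ab (g_ac g_bd - g_ad g_bc): the coordinate planes are
  curvature eigenplanes, with K = -f''/2 for the (t,r)-plane, K = (1 - f)/r^2 for the
  (theta,phi)-plane and K = -f'/(2r) for the four mixed planes. Inserting this into the Bel tensor,
  -j^t r^2 becomes an angular factor of the form alpha(phi) + beta(phi) cos^2 theta times a
  polynomial in 1/r, so Q factors into an elementary integral over the sphere and the integral of
  that polynomial over (r_+, oo). Finally r_+^2 - 2 m r_+ + q^2 = 0 eliminates q.
\<close>

section \<open>Diagonal metrics depending on r and theta\<close>

lemma pd_eqI: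
  assumes "open S" and "p i \<in> S" and "\<And>s. s \<in> S \<Longrightarrow> F (p(i := s)) = h s"
    and "(h has_real_derivative D) (at (p i))"
  shows "pd F i p = D"
proof -
  have "((\<lambda>s. F (p(i := s))) has_real_derivative D) (at (p i))"
    by (rule has_field_derivative_transform_within_open[OF assms(4,1,2)]) (simp add: assms(3))
  then show ?thesis
    unfolding pd_def by (rule DERIV_imp_deriv)
qed

lemma pd_r_theta:
  fixes \<phi> :: "real \<Rightarrow> real \<Rightarrow> real"
  assumes "open U" and "p 1 \<in> U"
    and F: "\<And>y. y 1 \<in> U \<Longrightarrow> F y = \<phi> (y 1) (y 2)"
    and "((\<lambda>r. \<phi> r (p 2)) has_real_derivative Dr) (at (p 1))"
    and "(\<phi> (p 1) has_real_derivative Dth) (at (p 2))"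
  shows "pd F b p = (if b = 1 then Dr else if b = 2 then Dth else 0)"
proof -
  consider "b = 1" | "b = 2" | "b \<noteq> 1" "b \<noteq> 2" by blast
  then show ?thesis
  proof cases
    case 1
    then show ?thesis
      using assms(1,2,4) by (auto intro!: pd_eqI[where S = U and h = "\<lambda>r. \<phi> r (p 2)"] simp: F)
  next
    case 2
    then show ?thesis
      using assms(2,5) by (auto intro!: pd_eqI[where S = UNIV and h = "\<phi> (p 1)"] simp: F)
  next
    case 3
    then show ?thesis
      using assms(2) by (auto intro!: pd_eqI[where S = UNIV and h = "\<lambda>_. \<phi> (p 1) (p 2)"] simp: F)
  qed
qed

definition diag_mat :: "(nat \<Rightarrow> real) \<Rightarrow> nat \<Rightarrow> nat \<Rightarrow> real" where
  "diag_mat G a b = (if a = b then G a else 0)"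

text \<open>
  The coordinate derivative d_b g_dc of a diagonal metric whose entries depend only on r = x^1 and
  theta = x^2; Gr and Gth are the r- and theta-derivatives of the diagonal entries.
\<close>

definition diag_partial :: "(nat \<Rightarrow> real) \<Rightarrow> (nat \<Rightarrow> real) \<Rightarrow> nat \<Rightarrow> nat \<Rightarrow> nat \<Rightarrow> real" where
  "diag_partial Gr Gth d c b =
     (if d = c then (if b = 1 then Gr d else if b = 2 then Gth d else 0) else 0)"

definition diag_chr ::
    "(nat \<Rightarrow> real) \<Rightarrow> (nat \<Rightarrow> real) \<Rightarrow> (nat \<Rightarrow> real) \<Rightarrow> nat \<Rightarrow> nat \<Rightarrow> nat \<Rightarrow> real" where
  "diag_chr G Gr Gth a b c =
     (if a < 4 then (diag_partial Gr Gth a c b + diag_partial Gr Gth a b c - diag_partial Gr Gth b c a)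
                    / (2 * G a)
      else 0)"

lemma sum_diag_mat: "(\<Sum>d<n. diag_mat G a d * F d) = (if a < n then G a * F a else 0)"
proof -
  have "(\<Sum>d<n. diag_mat G a d * F d) = (\<Sum>d<n. if a = d then G a * F d else 0)"
    by (rule sum.cong) (auto simp: diag_mat_def)
  then show ?thesis
    by (simp add: sum.delta)
qed

lemma Chr_diag:
  assumes "g p = diag_mat G" and "gi p = diag_mat (\<lambda>a. 1 / G a)"
    and "\<And>d c b. pd (\<lambda>y. g y d c) b p = diag_partial Gr Gth d c b"
  shows "Chr g gi p a b c = diag_chr G Gr Gth a b c"
  unfolding Chr_def assms sum_diag_mat diag_chr_def
  by (cases "G a = 0") (auto simp: field_simps)

definition diag_chr_deriv ::
    "(nat \<Rightarrow> real) \<Rightarrow> (nat \<Rightarrow> real) \<Rightarrow> (nat \<Rightarrow> real) \<Rightarrow> (nat \<Rightarrow> real) \<Rightarrow> (nat \<Rightarrow> real) \<Rightarrow> (nat \<Rightarrow> real)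
       \<Rightarrow> nat \<Rightarrow> nat \<Rightarrow> nat \<Rightarrow> real" where
  "diag_chr_deriv G G' Gr Gth Gr' Gth' a b c =
     (if a < 4 then
        ((diag_partial Gr' Gth' a c b + diag_partial Gr' Gth' a b c - diag_partial Gr' Gth' b c a) * (2 * G a)
         - (diag_partial Gr Gth a c b + diag_partial Gr Gth a b c - diag_partial Gr Gth b c a) * (2 * G' a))
        / (2 * G a)^2
      else 0)"

lemma diag_partial_has_derivative:
  assumes "\<And>d. ((\<lambda>s. Gr s d) has_real_derivative Gr' d) (at x)"
    and "\<And>d. ((\<lambda>s. Gth s d) has_real_derivative Gth' d) (at x)"
  shows "((\<lambda>s. diag_partial (Gr s) (Gth s) d c b) has_real_derivative diag_partial Gr' Gth' d c b) (at x)"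
  unfolding diag_partial_def using assms by (cases "d = c"; cases "b = 1"; cases "b = 2") simp_all

lemma diag_chr_has_derivative:
  assumes "\<And>d. ((\<lambda>s. G s d) has_real_derivative G' d) (at x)"
    and "\<And>d. ((\<lambda>s. Gr s d) has_real_derivative Gr' d) (at x)"
    and "\<And>d. ((\<lambda>s. Gth s d) has_real_derivative Gth' d) (at x)"
    and "a < 4 \<Longrightarrow> G x a \<noteq> 0"
  shows "((\<lambda>s. diag_chr (G s) (Gr s) (Gth s) a b c)
           has_real_derivative diag_chr_deriv (G x) G' (Gr x) (Gth x) Gr' Gth' a b c) (at x)"
proof (cases "a < 4")
  case True
  have "((\<lambda>s. (diag_partial (Gr s) (Gth s) a c b + diag_partial (Gr s) (Gth s) a b c
                - diag_partial (Gr s) (Gth s) b c a) / (2 * G s a))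
        has_real_derivative
          ((diag_partial Gr' Gth' a c b + diag_partial Gr' Gth' a b c - diag_partial Gr' Gth' b c a)
             * (2 * G x a)
           - (diag_partial (Gr x) (Gth x) a c b + diag_partial (Gr x) (Gth x) a b c
                - diag_partial (Gr x) (Gth x) b c a) * (2 * G' a))
          / ((2 * G x a) * (2 * G x a))) (at x)"
    using assms True
    by (intro DERIV_divide DERIV_add DERIV_diff DERIV_cmult diag_partial_has_derivative) auto
  with True show ?thesis
    unfolding diag_chr_def diag_chr_deriv_def by (simp add: power2_eq_square)
qed (simp add: diag_chr_def diag_chr_deriv_def)

lemma Bel_diag:
  fixes g gi :: metric and G :: "nat \<Rightarrow> real"
  assumes g: "g p = diag_mat G" and gi: "gi p = diag_mat (\<lambda>a. 1 / G a)"
  defines "R \<equiv> Riem g gi p"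
  shows "Bel g gi p al be la mu =
       (\<Sum>rho<4. \<Sum>sg<4. R al rho la sg * (1 / G rho) * (1 / G sg) * R be rho mu sg)
     + (\<Sum>rho<4. \<Sum>sg<4. R al rho mu sg * (1 / G rho) * (1 / G sg) * R be rho la sg)
     - diag_mat G al be / 2 * (\<Sum>rho<4. \<Sum>ta<4. \<Sum>sg<4.
            R rho ta la sg * (1 / G rho) * (1 / G ta) * (1 / G sg) * R rho ta mu sg)
     - diag_mat G la mu / 2 * (\<Sum>rho<4. \<Sum>sg<4. \<Sum>ta<4.
            R al rho sg ta * (1 / G rho) * (1 / G sg) * (1 / G ta) * R be rho sg ta)
     + diag_mat G al be * diag_mat G la mu / 8 * (\<Sum>rho<4. \<Sum>ta<4. \<Sum>sg<4. \<Sum>nu<4.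
            R rho ta sg nu * (1 / G rho) * (1 / G ta) * (1 / G sg) * (1 / G nu) * R rho ta sg nu)"
proof -
  have if_zero_simps:
    "\<And>P x y :: real. (if P then y else 0) * x = (if P then y * x else 0)"
    "\<And>P x y :: real. x * (if P then y else 0) = (if P then x * y else 0)"
    "\<And>P A (f :: nat \<Rightarrow> real). (\<Sum>x\<in>A. if P then f x else 0) = (if P then sum f A else 0)"
    "\<And>n (f :: nat \<Rightarrow> real). (\<Sum>x<n. if x < n then f x else 0) = sum f {..<n}"
    by simp_all
  show ?thesis
    unfolding Bel_def Let_def g gi diag_mat_def
    by (simp only: if_zero_simps(1-3), simp add: sum.delta sum.delta' if_zero_simps R_def)
qed

section \<open>Curvature of the Reissner-Nordstrom metric\<close>

definition fRN_r :: "real \<Rightarrow> real \<Rightarrow> real \<Rightarrow> real" where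
  "fRN_r m q r = 2 * m / r^2 - 2 * q^2 / r^3"

definition fRN_rr :: "real \<Rightarrow> real \<Rightarrow> real \<Rightarrow> real" where
  "fRN_rr m q r = - 4 * m / r^3 + 6 * q^2 / r^4"

lemma fRN_has_derivative: "r \<noteq> 0 \<Longrightarrow> (fRN m q has_real_derivative fRN_r m q r) (at r)"
  unfolding fRN_def fRN_r_def
  by (auto intro!: derivative_eq_intros simp: field_simps eval_nat_numeral)

lemma fRN_r_has_derivative: "r \<noteq> 0 \<Longrightarrow> (fRN_r m q has_real_derivative fRN_rr m q r) (at r)"
  unfolding fRN_r_def fRN_rr_def
  by (auto intro!: derivative_eq_intros simp: field_simps eval_nat_numeral)

definition gdiag :: "real \<Rightarrow> real \<Rightarrow> real \<Rightarrow> real \<Rightarrow> nat \<Rightarrow> real" where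
  "gdiag m q r th a =
     (if a = 0 then - fRN m q r else if a = 1 then 1 / fRN m q r
      else if a = 2 then r^2 else if a = 3 then r^2 * (sin th)^2 else 0)"

definition gdiag_r :: "real \<Rightarrow> real \<Rightarrow> real \<Rightarrow> real \<Rightarrow> nat \<Rightarrow> real" where
  "gdiag_r m q r th a =
     (if a = 0 then - fRN_r m q r else if a = 1 then - fRN_r m q r / (fRN m q r)^2
      else if a = 2 then 2 * r else if a = 3 then 2 * r * (sin th)^2 else 0)"

definition gdiag_th :: "real \<Rightarrow> real \<Rightarrow> real \<Rightarrow> real \<Rightarrow> nat \<Rightarrow> real" where
  "gdiag_th m q r th a = (if a = 3 then 2 * r^2 * sin th * cos th else 0)"

definition gdiag_rr :: "real \<Rightarrow> real \<Rightarrow> real \<Rightarrow> real \<Rightarrow> nat \<Rightarrow> real" where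
  "gdiag_rr m q r th a =
     (if a = 0 then - fRN_rr m q r
      else if a = 1 then - fRN_rr m q r / (fRN m q r)^2 + 2 * (fRN_r m q r)^2 / (fRN m q r)^3
      else if a = 2 then 2 else if a = 3 then 2 * (sin th)^2 else 0)"

definition gdiag_rth :: "real \<Rightarrow> real \<Rightarrow> real \<Rightarrow> real \<Rightarrow> nat \<Rightarrow> real" where
  "gdiag_rth m q r th a = (if a = 3 then 4 * r * sin th * cos th else 0)"

definition gdiag_thth :: "real \<Rightarrow> real \<Rightarrow> real \<Rightarrow> real \<Rightarrow> nat \<Rightarrow> real" where
  "gdiag_thth m q r th a = (if a = 3 then 2 * r^2 * ((cos th)^2 - (sin th)^2) else 0)"

lemma gdiag_has_derivative_r:
  "r \<noteq> 0 \<Longrightarrow> fRN m q r \<noteq> 0 \<Longrightarrow> ((\<lambda>s. gdiag m q s th a) has_real_derivative gdiag_r m q r th a) (at r)"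
  unfolding gdiag_def gdiag_r_def
  by (cases "a = 0"; cases "a = 1"; cases "a = 2"; cases "a = 3")
     (auto intro!: derivative_eq_intros fRN_has_derivative simp: field_simps eval_nat_numeral)

lemma gdiag_has_derivative_th: "((\<lambda>s. gdiag m q r s a) has_real_derivative gdiag_th m q r th a) (at th)"
  unfolding gdiag_def gdiag_th_def
  by (cases "a = 0"; cases "a = 1"; cases "a = 2"; cases "a = 3")
     (auto intro!: derivative_eq_intros simp: field_simps eval_nat_numeral)

lemma gdiag_r_has_derivative_r:
  "r \<noteq> 0 \<Longrightarrow> fRN m q r \<noteq> 0 \<Longrightarrow> ((\<lambda>s. gdiag_r m q s th a) has_real_derivative gdiag_rr m q r th a) (at r)"
  unfolding gdiag_r_def gdiag_rr_def
  by (cases "a = 0"; cases "a = 1"; cases "a = 2"; cases "a = 3")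
     (auto intro!: derivative_eq_intros fRN_has_derivative fRN_r_has_derivative simp: field_simps eval_nat_numeral)

lemma gdiag_r_has_derivative_th: "((\<lambda>s. gdiag_r m q r s a) has_real_derivative gdiag_rth m q r th a) (at th)"
  unfolding gdiag_r_def gdiag_rth_def
  by (cases "a = 0"; cases "a = 1"; cases "a = 2"; cases "a = 3")
     (auto intro!: derivative_eq_intros simp: field_simps eval_nat_numeral)

lemma gdiag_th_has_derivative_r: "((\<lambda>s. gdiag_th m q s th a) has_real_derivative gdiag_rth m q r th a) (at r)"
  unfolding gdiag_th_def gdiag_rth_def
  by (cases "a = 3") (auto intro!: derivative_eq_intros simp: field_simps eval_nat_numeral)

lemma gdiag_th_has_derivative_th: "((\<lambda>s. gdiag_th m q r s a) has_real_derivative gdiag_thth m q r th a) (at th)"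
  unfolding gdiag_th_def gdiag_thth_def
  by (cases "a = 3") (auto intro!: derivative_eq_intros simp: field_simps eval_nat_numeral power2_eq_square)

lemma gdiag_nonzero: "r \<noteq> 0 \<Longrightarrow> fRN m q r \<noteq> 0 \<Longrightarrow> sin th \<noteq> 0 \<Longrightarrow> a < 4 \<Longrightarrow> gdiag m q r th a \<noteq> 0"
  unfolding gdiag_def by (auto simp: less_Suc_eq numeral_eq_Suc)

lemma gRN_diag: "gRN m q p = diag_mat (gdiag m q (p 1) (p 2))"
  unfolding gRN_def gdiag_def diag_mat_def by (auto simp: fun_eq_iff)

lemma giRN_diag: "giRN m q p = diag_mat (\<lambda>a. 1 / gdiag m q (p 1) (p 2) a)"
  unfolding giRN_def gdiag_def diag_mat_def by (auto simp: fun_eq_iff)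

lemma pd_gRN:
  assumes "p 1 \<noteq> 0" and "fRN m q (p 1) \<noteq> 0"
  shows "pd (\<lambda>y. gRN m q y d c) b p = diag_partial (gdiag_r m q (p 1) (p 2)) (gdiag_th m q (p 1) (p 2)) d c b"
proof -
  have "pd (\<lambda>y. gRN m q y d c) b p = (if b = 1 then diag_mat (gdiag_r m q (p 1) (p 2)) d c
          else if b = 2 then diag_mat (gdiag_th m q (p 1) (p 2)) d c else 0)"
    by (rule pd_r_theta[where U = UNIV and \<phi> = "\<lambda>r th. diag_mat (gdiag m q r th) d c"])
      (use assms in \<open>auto simp: gRN_diag diag_mat_def gdiag_has_derivative_r gdiag_has_derivative_th\<close>)
  then show ?thesis
    by (simp add: diag_mat_def diag_partial_def)
qed

definition chrRN :: "real \<Rightarrow> real \<Rightarrow> real \<Rightarrow> real \<Rightarrow> nat \<Rightarrow> nat \<Rightarrow> nat \<Rightarrow> real" where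
  "chrRN m q r th = diag_chr (gdiag m q r th) (gdiag_r m q r th) (gdiag_th m q r th)"

definition chrRN_r :: "real \<Rightarrow> real \<Rightarrow> real \<Rightarrow> real \<Rightarrow> nat \<Rightarrow> nat \<Rightarrow> nat \<Rightarrow> real" where
  "chrRN_r m q r th = diag_chr_deriv (gdiag m q r th) (gdiag_r m q r th)
     (gdiag_r m q r th) (gdiag_th m q r th) (gdiag_rr m q r th) (gdiag_rth m q r th)"

definition chrRN_th :: "real \<Rightarrow> real \<Rightarrow> real \<Rightarrow> real \<Rightarrow> nat \<Rightarrow> nat \<Rightarrow> nat \<Rightarrow> real" where
  "chrRN_th m q r th = diag_chr_deriv (gdiag m q r th) (gdiag_th m q r th)
     (gdiag_r m q r th) (gdiag_th m q r th) (gdiag_rth m q r th) (gdiag_thth m q r th)"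

lemma Chr_RN:
  assumes "y 1 \<noteq> 0" and "fRN m q (y 1) \<noteq> 0"
  shows "Chr (gRN m q) (giRN m q) y a b c = chrRN m q (y 1) (y 2) a b c"
  unfolding chrRN_def using pd_gRN[of y, OF assms] by (intro Chr_diag gRN_diag giRN_diag)

lemma chrRN_has_derivative_r:
  assumes "r \<noteq> 0" and "fRN m q r \<noteq> 0" and "sin th \<noteq> 0"
  shows "((\<lambda>s. chrRN m q s th a b c) has_real_derivative chrRN_r m q r th a b c) (at r)"
  unfolding chrRN_def chrRN_r_def using assms
  by (intro diag_chr_has_derivative gdiag_has_derivative_r gdiag_r_has_derivative_r
      gdiag_th_has_derivative_r gdiag_nonzero)

lemma chrRN_has_derivative_th:
  assumes "r \<noteq> 0" and "fRN m q r \<noteq> 0" and "sin th \<noteq> 0"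
  shows "((\<lambda>s. chrRN m q r s a b c) has_real_derivative chrRN_th m q r th a b c) (at th)"
  unfolding chrRN_def chrRN_th_def using assms
  by (intro diag_chr_has_derivative gdiag_has_derivative_th gdiag_r_has_derivative_th
      gdiag_th_has_derivative_th gdiag_nonzero)

definition riemUpRN :: "real \<Rightarrow> real \<Rightarrow> real \<Rightarrow> real \<Rightarrow> nat \<Rightarrow> nat \<Rightarrow> nat \<Rightarrow> nat \<Rightarrow> real" where
  "riemUpRN m q r th a b c d =
     (if c = 1 then chrRN_r m q r th a d b else if c = 2 then chrRN_th m q r th a d b else 0)
   - (if d = 1 then chrRN_r m q r th a c b else if d = 2 then chrRN_th m q r th a c b else 0)
   + (\<Sum>e<4. chrRN m q r th a c e * chrRN m q r th e d b - chrRN m q r th a d e * chrRN m q r th e c b)"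

definition curv_tr :: "real \<Rightarrow> real \<Rightarrow> real \<Rightarrow> real" where
  "curv_tr m q r = - fRN_rr m q r / 2"

definition curv_mixed :: "real \<Rightarrow> real \<Rightarrow> real \<Rightarrow> real" where
  "curv_mixed m q r = - fRN_r m q r / (2 * r)"

definition curv_ang :: "real \<Rightarrow> real \<Rightarrow> real \<Rightarrow> real" where
  "curv_ang m q r = (1 - fRN m q r) / r^2"

definition sec_curv :: "real \<Rightarrow> real \<Rightarrow> real \<Rightarrow> nat \<Rightarrow> nat \<Rightarrow> real" where
  "sec_curv m q r a b =
     (if (a = 0 \<and> b = 1) \<or> (a = 1 \<and> b = 0) then curv_tr m q r
      else if (a = 2 \<and> b = 3) \<or> (a = 3 \<and> b = 2) then curv_ang m q r
      else curv_mixed m q r)"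

definition riemRN :: "real \<Rightarrow> real \<Rightarrow> real \<Rightarrow> real \<Rightarrow> nat \<Rightarrow> nat \<Rightarrow> nat \<Rightarrow> nat \<Rightarrow> real" where
  "riemRN m q r th a b c d =
     sec_curv m q r a b * (diag_mat (gdiag m q r th) a c * diag_mat (gdiag m q r th) b d
                           - diag_mat (gdiag m q r th) a d * diag_mat (gdiag m q r th) b c)"

lemma sum4: "(\<Sum>e<(4::nat). F e) = F 0 + F 1 + F 2 + F 3"
  by (simp add: eval_nat_numeral)

lemma less4_cases: "(a::nat) < 4 \<longleftrightarrow> a = 0 \<or> a = 1 \<or> a = 2 \<or> a = 3"
  by auto

text \<open>
  The identity holds with f, f' and f'' as independent unknowns, so each of the 256 index cases is
  an identity between rational functions.
\<close>

lemma riemUpRN_lower_index: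
  assumes "r \<noteq> 0" "fRN m q r \<noteq> 0" "sin th \<noteq> 0" "a < 4" "b < 4" "c < 4" "d < 4"
  shows "gdiag m q r th a * riemUpRN m q r th a b c d = riemRN m q r th a b c d"
  using assms(4-7) unfolding less4_cases
  by (elim disjE;
      simp add: riemUpRN_def sum4 chrRN_def chrRN_r_def chrRN_th_def diag_chr_def
        diag_chr_deriv_def diag_partial_def gdiag_def gdiag_r_def gdiag_th_def gdiag_rr_def
        gdiag_rth_def gdiag_thth_def riemRN_def diag_mat_def sec_curv_def curv_tr_def
        curv_mixed_def curv_ang_def;
      use assms(1-3) in \<open>simp add: field_simps\<close>;
      simp add: eval_nat_numeral algebra_simps)

lemma curvatures_RN:
  assumes "r \<noteq> 0"
  shows "curv_tr m q r = (2 * m * r - 3 * q^2) / r^4"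
    and "curv_mixed m q r = (q^2 - m * r) / r^4"
    and "curv_ang m q r = (2 * m * r - q^2) / r^4"
    and "fRN m q r = (r^2 - 2 * m * r + q^2) / r^2"
  using assms
  by (simp_all add: curv_tr_def curv_mixed_def curv_ang_def fRN_def fRN_r_def fRN_rr_def
      field_simps eval_nat_numeral)

locale rn_exterior =
  fixes m q :: real
  assumes mass_pos: "m > 0" and charge_le_mass: "q^2 \<le> m^2"
begin

lemma rplus_pos: "rplus m q > 0"
  unfolding rplus_def using mass_pos charge_le_mass by (simp add: add_pos_nonneg)

lemma horizon_charge: "q^2 = 2 * m * rplus m q - (rplus m q)^2"
  unfolding rplus_def using charge_le_mass by (simp add: power2_eq_square algebra_simps)

lemma exterior_pos:
  assumes "r > rplus m q"
  shows "r > 0" and "fRN m q r > 0"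
proof -
  define d where "d = sqrt (m^2 - q^2)"
  have "d \<ge> 0" and d_sq: "d^2 = m^2 - q^2"
    unfolding d_def using charge_le_mass by simp_all
  moreover have "rplus m q = m + d"
    unfolding rplus_def d_def ..
  ultimately have r_gt: "r - m > d" and "d \<ge> 0"
    using assms by auto
  then show "r > 0"
    using mass_pos by simp
  have "r^2 * fRN m q r = r^2 - 2 * m * r + q^2"
    using \<open>r > 0\<close> unfolding fRN_def by (simp add: field_simps power2_eq_square)
  also have "\<dots> = (r - m - d) * (r - m + d)"
    using d_sq by (simp add: algebra_simps power2_eq_square)
  also have "\<dots> > 0"
    using r_gt \<open>d \<ge> 0\<close> by (intro mult_pos_pos) auto
  finally show "fRN m q r > 0"
    by (simp add: zero_less_mult_iff)
qed

lemma pd_Chr_RN: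
  assumes "p 1 > rplus m q" and "sin (p 2) \<noteq> 0"
  shows "pd (\<lambda>y. Chr (gRN m q) (giRN m q) y a d b) c p =
    (if c = 1 then chrRN_r m q (p 1) (p 2) a d b else if c = 2 then chrRN_th m q (p 1) (p 2) a d b else 0)"
proof (rule pd_r_theta[where U = "{rplus m q<..}" and \<phi> = "\<lambda>r th. chrRN m q r th a d b"])
  show "Chr (gRN m q) (giRN m q) y a d b = chrRN m q (y 1) (y 2) a d b" if "y 1 \<in> {rplus m q<..}" for y
    using that exterior_pos[of "y 1"] by (intro Chr_RN) auto
qed (use assms exterior_pos[OF assms(1)] in \<open>auto intro: chrRN_has_derivative_r chrRN_has_derivative_th\<close>)

lemma Riem_RN:
  assumes "p 1 > rplus m q" and "sin (p 2) \<noteq> 0" and "a < 4" "b < 4" "c < 4" "d < 4"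
  shows "Riem (gRN m q) (giRN m q) p a b c d = riemRN m q (p 1) (p 2) a b c d"
proof -
  have "RiemUp (gRN m q) (giRN m q) p a b c d = riemUpRN m q (p 1) (p 2) a b c d"
    unfolding RiemUp_def riemUpRN_def
    using assms(1,2) exterior_pos[OF assms(1)] by (simp add: pd_Chr_RN Chr_RN)
  then have "Riem (gRN m q) (giRN m q) p a b c d = gdiag m q (p 1) (p 2) a * riemUpRN m q (p 1) (p 2) a b c d"
    unfolding Riem_def gRN_diag sum_diag_mat using assms(3) by simp
  also have "\<dots> = riemRN m q (p 1) (p 2) a b c d"
    using assms exterior_pos[OF assms(1)] by (intro riemUpRN_lower_index) auto
  finally show ?thesis .
qed

lemma Bel_RN_tttt:
  assumes "p 1 > rplus m q" and "sin (p 2) \<noteq> 0"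
  shows "Bel (gRN m q) (giRN m q) p 0 0 0 0 = (fRN m q (p 1))^2 / 2
           * ((curv_tr m q (p 1))^2 + 4 * (curv_mixed m q (p 1))^2 + (curv_ang m q (p 1))^2)"
  using assms exterior_pos[OF assms(1)]
  by (simp only: Bel_diag[OF gRN_diag giRN_diag] sum4,
      simp add: Riem_RN riemRN_def sec_curv_def diag_mat_def gdiag_def,
      simp add: field_simps power2_eq_square)

lemma jRN_xi1_time:
  assumes "p 1 > rplus m q" and "sin (p 2) \<noteq> 0"
  shows "jRN m q xi1 xi1 xi1 p 0 = - fRN m q (p 1) / 2
           * ((curv_tr m q (p 1))^2 + 4 * (curv_mixed m q (p 1))^2 + (curv_ang m q (p 1))^2)"
  using exterior_pos[OF assms(1)]
  by (simp add: jRN_def BelCur_def BelCurLow_def sum4 giRN_diag diag_mat_def xi1_def Bel_RN_tttt[OF assms],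
      simp add: gdiag_def field_simps power2_eq_square)

lemma jRN_tangent_time:
  assumes "p 1 > rplus m q" and "sin (p 2) \<noteq> 0" and "X p 0 = 0" and "X p 1 = 0"
  shows "jRN m q X X xi1 p 0 =
     - (gdiag m q (p 1) (p 2) 2 * (X p 2)^2 + gdiag m q (p 1) (p 2) 3 * (X p 3)^2)
     * ((curv_tr m q (p 1))^2 / 2 + (curv_ang m q (p 1))^2 / 2
        - 2 * curv_mixed m q (p 1) * (curv_tr m q (p 1) + curv_ang m q (p 1))) / 3"
  using assms exterior_pos[OF assms(1)]
  by (simp add: jRN_def BelCur_def BelCurLow_def sum4 giRN_diag diag_mat_def xi1_def,
      simp only: Bel_diag[OF gRN_diag giRN_diag] sum4,
      simp add: Riem_RN riemRN_def sec_curv_def diag_mat_def gdiag_def,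
      simp add: field_simps power2_eq_square,
      simp add: eval_nat_numeral algebra_simps)

end

section \<open>Fluxes\<close>

lemma coords_simps [simp]:
  "coords t r th ph 0 = t" "coords t r th ph 1 = r" "coords t r th ph 2 = th" "coords t r th ph 3 = ph"
  "coords t r th ph (Suc 0) = r"
  unfolding coords_def by auto

definition inv_poly :: "real list \<Rightarrow> real \<Rightarrow> real" where
  "inv_poly cs r = (\<Sum>k<length cs. cs ! k / r^(k+2))"

lemma inv_power_integral:
  fixes a :: real
  assumes "a > 0"
  shows "set_integrable lborel {a<..} (\<lambda>r. 1 / r^(n+2))"
    and "(LBINT r:{a<..}. 1 / r^(n+2)) = 1 / (real (n+1) * a^(n+1))"
proof -
  define F where "F = (\<lambda>r::real. - 1 / (real (n+1) * r^(n+1)))"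
  have F_deriv: "(F has_real_derivative 1 / x^(n+2)) (at x)" if "x > 0" for x
  proof -
    have "((\<lambda>r. r^(n+1)) has_real_derivative real (n+1) * x^n) (at x)"
      using DERIV_pow[of "n+1" x] by simp
    then have "(F has_real_derivative (0 * (real (n+1) * x^(n+1)) - (- 1) * (real (n+1) * (real (n+1) * x^n)))
        / ((real (n+1) * x^(n+1)) * (real (n+1) * x^(n+1)))) (at x)"
      unfolding F_def using that by (intro DERIV_divide DERIV_const DERIV_cmult) simp_all
    moreover have "(0 * (c * x^(n+1)) - (- 1) * (c * (c * x^n))) / ((c * x^(n+1)) * (c * x^(n+1)))
        = 1 / x^(n+2)" if "c \<noteq> 0" for c :: real
      using that \<open>x > 0\<close> by (simp add: field_simps power_add)
    ultimately show ?thesis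
      by (metis of_nat_eq_0_iff add_eq_0_iff_both_eq_0 one_neq_zero)
  qed
  have cont: "isCont (\<lambda>r. 1 / r^(n+2)) x" if "x > 0" for x :: real
    using that by (intro continuous_intros) auto
  have lim_a: "((F \<circ> real_of_ereal) \<longlongrightarrow> F a) (at_right (ereal a))"
    unfolding ereal_tendsto_simps F_def using assms by (auto intro!: tendsto_eq_intros)
  have lim_inf: "((F \<circ> real_of_ereal) \<longlongrightarrow> 0) (at_left \<infinity>)"
    unfolding ereal_tendsto_simps F_def by real_asymp
  have interval: "einterval (ereal a) \<infinity> = {a<..}"
    by (auto simp: einterval_def)
  have "set_integrable lborel (einterval (ereal a) \<infinity>) (\<lambda>r. 1 / r^(n+2))"
    and "(LBINT x=ereal a..\<infinity>. 1 / x^(n+2)) = 0 - F a"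
    by (rule interval_integral_FTC_nonneg[where F = F, OF _ F_deriv cont _ lim_a lim_inf];
        use assms in auto)+
  then show "set_integrable lborel {a<..} (\<lambda>r. 1 / r^(n+2))"
    and "(LBINT r:{a<..}. 1 / r^(n+2)) = 1 / (real (n+1) * a^(n+1))"
    unfolding interval interval_integral_to_infinity_eq F_def by simp_all
qed

lemma inv_poly_integral:
  fixes a :: real
  assumes "a > 0"
  shows "(LBINT r:{a<..}. inv_poly cs r) = (\<Sum>k<length cs. cs ! k / (real (k+1) * a^(k+1)))"
proof -
  have term_integrable: "set_integrable lborel {a<..} (\<lambda>r. c / r^(k+2))" for c k
    using set_integrable_mult_right[OF inv_power_integral(1)[OF assms, of k], of c] by simp
  have term_integral: "(LBINT r:{a<..}. c / r^(k+2)) = c / (real (k+1) * a^(k+1))" for c k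
    using set_integral_mult_right[of lborel "{a<..}" c "\<lambda>r. 1 / r^(k+2)"] inv_power_integral(2)[OF assms, of k]
    by simp
  have "(LBINT r:{a<..}. inv_poly cs r) = (\<Sum>k<length cs. LBINT r:{a<..}. cs ! k / r^(k+2))"
    unfolding inv_poly_def set_lebesgue_integral_def scaleR_sum_right
    using term_integrable unfolding set_integrable_def by (intro Bochner_Integration.integral_sum) auto
  then show ?thesis
    by (simp only: term_integral)
qed

lemma set_integral_Icc_FTC:
  fixes f g G :: "real \<Rightarrow> real"
  assumes "a \<le> b" and "\<And>x. a < x \<Longrightarrow> x < b \<Longrightarrow> f x = g x"
    and "\<And>x. (G has_real_derivative g x) (at x)" and "continuous_on {a..b} g"
  shows "(LBINT x:{a..b}. f x) = G b - G a"
proof -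
  have "(LBINT x:{a..b}. f x) = (LBINT x=a..b. f x)"
    by (rule interval_integral_Icc[OF assms(1), symmetric])
  also have "\<dots> = (LBINT x=a..b. g x)"
    by (rule interval_integral_cong) (use assms(1,2) in \<open>auto simp: einterval_iff min_def max_def\<close>)
  also have "\<dots> = G b - G a"
    by (rule interval_integral_FTC_finite)
      (use assms(1,3,4) in \<open>auto simp: min_def max_def has_real_derivative_iff_has_vector_derivative[symmetric]
         intro: has_field_derivative_at_within\<close>)
  finally show ?thesis .
qed

context rn_exterior
begin

lemma flux_density_xi1:
  assumes "r > rplus m q" and "0 < th" "th < pi"
  shows "- jRN m q xi1 xi1 xi1 (coords t0 r th ph) 0 * r^2 =
    inv_poly [0, 0, 6 * m^2, - 12 * m * (q^2 + m^2), 7 * q^4 + 30 * m^2 * q^2, - 26 * m * q^4, 7 * q^6] r"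
proof -
  have j: "jRN m q xi1 xi1 xi1 (coords t0 r th ph) 0 = - fRN m q r / 2
      * ((curv_tr m q r)^2 + 4 * (curv_mixed m q r)^2 + (curv_ang m q r)^2)"
    using jRN_xi1_time[of "coords t0 r th ph"] assms sin_gt_zero[OF assms(2,3)] by simp
  show ?thesis
    unfolding j inv_poly_def using exterior_pos(1)[OF assms(1)]
    by (simp add: curvatures_RN eval_nat_numeral field_simps)
qed

lemma flux_density_tangent:
  assumes "r > rplus m q" and "0 < th" "th < pi"
    and "X (coords t0 r th ph) 0 = 0" and "X (coords t0 r th ph) 1 = 0"
  shows "- jRN m q X X xi1 (coords t0 r th ph) 0 * r^2 =
    ((X (coords t0 r th ph) 2)^2 + (sin th)^2 * (X (coords t0 r th ph) 3)^2)
    * inv_poly [4 * m^2, - 8 * m * q^2, 13 * q^4 / 3] r"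
proof -
  have j: "jRN m q X X xi1 (coords t0 r th ph) 0 =
     - (r^2 * (X (coords t0 r th ph) 2)^2 + r^2 * (sin th)^2 * (X (coords t0 r th ph) 3)^2)
     * ((curv_tr m q r)^2 / 2 + (curv_ang m q r)^2 / 2
        - 2 * curv_mixed m q r * (curv_tr m q r + curv_ang m q r)) / 3"
    using jRN_tangent_time[of "coords t0 r th ph"] assms sin_gt_zero[OF assms(2,3)] by (simp add: gdiag_def)
  show ?thesis
    unfolding j inv_poly_def using exterior_pos(1)[OF assms(1)]
    by (simp add: curvatures_RN eval_nat_numeral field_simps)
qed

lemma flux_density_EM:
  assumes "r > rplus m q"
  shows "- EMcur m q xi1 (coords t0 r th ph) 0 * r^2 = inv_poly [q^2] r"
  using exterior_pos[OF assms]
  by (simp add: EMcur_def inv_poly_def sum4 TmixRN_def giRN_diag gRN_diag diag_mat_def xi1_def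
      gdiag_def field_simps eval_nat_numeral)

text \<open>
  Over [0, pi], sin theta (alpha + beta cos^2 theta) integrates to 2 alpha + 2 beta / 3, which is
  why Phi is required to have this derivative.
\<close>

lemma Qflux_separable:
  fixes A :: vfield and \<alpha> \<beta> \<Phi> :: "real \<Rightarrow> real"
  assumes density: "\<And>r th ph. r > rplus m q \<Longrightarrow> 0 < th \<Longrightarrow> th < pi \<Longrightarrow>
      - A (coords t0 r th ph) 0 * r^2 = (\<alpha> ph + \<beta> ph * (cos th)^2) * inv_poly cs r"
    and \<Phi>: "\<And>x. (\<Phi> has_real_derivative 2 * \<alpha> x + 2 / 3 * \<beta> x) (at x)"
    and "continuous_on {0..2*pi} \<alpha>" and "continuous_on {0..2*pi} \<beta>"
  shows "Qflux m q t0 A = (\<Phi> (2*pi) - \<Phi> 0) * (\<Sum>k<length cs. cs ! k / (real (k+1) * rplus m q ^ (k+1)))"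
    (is "_ = _ * ?K")
proof -
  have radial: "(LBINT r:{rplus m q<..}. - A (coords t0 r th ph) 0 * r^2) = (\<alpha> ph + \<beta> ph * (cos th)^2) * ?K"
    if "0 < th" "th < pi" for th ph
  proof -
    have "(LBINT r:{rplus m q<..}. - A (coords t0 r th ph) 0 * r^2) =
        (LBINT r:{rplus m q<..}. (\<alpha> ph + \<beta> ph * (cos th)^2) * inv_poly cs r)"
      by (rule set_lebesgue_integral_cong) (use density that in auto)
    also have "\<dots> = (\<alpha> ph + \<beta> ph * (cos th)^2) * ?K"
      by (simp only: set_integral_mult_right inv_poly_integral[OF rplus_pos])
    finally show ?thesis .
  qed
  have polar: "(LBINT th:{0..pi}. sin th * (LBINT r:{rplus m q<..}. - A (coords t0 r th ph) 0 * r^2))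
      = ?K * (2 * \<alpha> ph + 2 / 3 * \<beta> ph)" for ph
  proof -
    have "(LBINT th:{0..pi}. sin th * (LBINT r:{rplus m q<..}. - A (coords t0 r th ph) 0 * r^2))
        = - ?K * (\<alpha> ph * cos pi + \<beta> ph * (cos pi)^3 / 3) - - ?K * (\<alpha> ph * cos 0 + \<beta> ph * (cos 0)^3 / 3)"
    proof (rule set_integral_Icc_FTC[where g = "\<lambda>th. ?K * (sin th * (\<alpha> ph + \<beta> ph * (cos th)^2))"])
      show "((\<lambda>th. - ?K * (\<alpha> ph * cos th + \<beta> ph * (cos th)^3 / 3)) has_real_derivative
          ?K * (sin th * (\<alpha> ph + \<beta> ph * (cos th)^2))) (at th)" for th
        by (auto intro!: derivative_eq_intros simp: algebra_simps power2_eq_square eval_nat_numeral)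
    next
      show "continuous_on {0..pi} (\<lambda>th. ?K * (sin th * (\<alpha> ph + \<beta> ph * (cos th)^2)))"
        by (intro continuous_intros)
    qed (use radial in auto)
    then show ?thesis
      by (simp add: algebra_simps)
  qed
  have "Qflux m q t0 A = (LBINT ph:{0..2*pi}. ?K * (2 * \<alpha> ph + 2 / 3 * \<beta> ph))"
    unfolding Qflux_def polar ..
  also have "\<dots> = ?K * \<Phi> (2*pi) - ?K * \<Phi> 0"
  proof (rule set_integral_Icc_FTC[where g = "\<lambda>ph. ?K * (2 * \<alpha> ph + 2 / 3 * \<beta> ph)"])
    show "((\<lambda>x. ?K * \<Phi> x) has_real_derivative ?K * (2 * \<alpha> x + 2 / 3 * \<beta> x)) (at x)" for x
      by (rule DERIV_cmult[OF \<Phi>])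
    show "continuous_on {0..2*pi} (\<lambda>ph. ?K * (2 * \<alpha> ph + 2 / 3 * \<beta> ph))"
      using assms(3,4) by (intro continuous_intros)
  qed simp_all
  finally show ?thesis
    by (simp add: algebra_simps)
qed

lemma flux_xi1:
  "Qflux m q t0 (jRN m q xi1 xi1 xi1) = 4 * pi / (15 * rplus m q)
     * (6 - 14 * m / rplus m q + 14 * m^2 / (rplus m q)^2 - 5 * m^3 / (rplus m q)^3)"
proof -
  define cs where "cs = [0, 0, 6 * m^2, - 12 * m * (q^2 + m^2), 7 * q^4 + 30 * m^2 * q^2, - 26 * m * q^4, 7 * q^6]"
  have "Qflux m q t0 (jRN m q xi1 xi1 xi1) = (2 * (2 * pi) - 2 * 0)
      * (\<Sum>k<length cs. cs ! k / (real (k+1) * rplus m q ^ (k+1)))"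
  proof (rule Qflux_separable[where \<alpha> = "\<lambda>_. 1" and \<beta> = "\<lambda>_. 0" and \<Phi> = "\<lambda>x. 2 * x"])
    show "- jRN m q xi1 xi1 xi1 (coords t0 r th ph) 0 * r^2 = (1 + 0 * (cos th)^2) * inv_poly cs r"
      if "r > rplus m q" "0 < th" "th < pi" for r th ph
      using flux_density_xi1[OF that] by (simp add: cs_def)
  qed (auto intro!: derivative_eq_intros)
  also have "\<dots> = 4 * pi / (15 * rplus m q)
     * (6 - 14 * m / rplus m q + 14 * m^2 / (rplus m q)^2 - 5 * m^3 / (rplus m q)^3)"
  proof -
    have "q^4 = (q^2)^2" and "q^6 = (q^2)^3"
      by simp_all
    then show ?thesis
      unfolding cs_def using rplus_pos
      by (simp add: field_simps horizon_charge) (simp add: algebra_simps power2_eq_square eval_nat_numeral)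
  qed
  finally show ?thesis .
qed

lemma flux_EM: "Qflux m q t0 (EMcur m q xi1) = 4 * pi * q^2 / rplus m q"
proof -
  have "Qflux m q t0 (EMcur m q xi1) = (2 * (2 * pi) - 2 * 0)
      * (\<Sum>k<length [q^2]. [q^2] ! k / (real (k+1) * rplus m q ^ (k+1)))"
  proof (rule Qflux_separable[where \<alpha> = "\<lambda>_. 1" and \<beta> = "\<lambda>_. 0" and \<Phi> = "\<lambda>x. 2 * x"])
    show "- EMcur m q xi1 (coords t0 r th ph) 0 * r^2 = (1 + 0 * (cos th)^2) * inv_poly [q^2] r"
      if "r > rplus m q" for r th ph
      using flux_density_EM[OF that] by simp
  qed (auto intro!: derivative_eq_intros)
  then show ?thesis
    by simp
qed

lemma flux_tangent:
  assumes "\<And>p. X p 0 = 0" and "\<And>p. X p 1 = 0"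
    and angular: "\<And>r th ph. 0 < th \<Longrightarrow> th < pi \<Longrightarrow>
      (X (coords t0 r th ph) 2)^2 + (sin th)^2 * (X (coords t0 r th ph) 3)^2 = \<alpha> ph + \<beta> ph * (cos th)^2"
    and \<Phi>: "\<And>x. (\<Phi> has_real_derivative 2 * \<alpha> x + 2 / 3 * \<beta> x) (at x)"
    and "continuous_on {0..2*pi} \<alpha>" and "continuous_on {0..2*pi} \<beta>"
    and "\<Phi> (2 * pi) - \<Phi> 0 = 8 * pi / 3"
  shows "Qflux m q t0 (jRN m q X X xi1)
           = 8 * pi / 27 * rplus m q * (13 - 16 * m / rplus m q + 16 * m^2 / (rplus m q)^2)"
proof -
  define cs where "cs = [4 * m^2, - 8 * m * q^2, 13 * q^4 / 3]"
  have "Qflux m q t0 (jRN m q X X xi1) = (\<Phi> (2 * pi) - \<Phi> 0)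
      * (\<Sum>k<length cs. cs ! k / (real (k+1) * rplus m q ^ (k+1)))"
  proof (rule Qflux_separable[OF _ \<Phi> assms(5,6)])
    show "- jRN m q X X xi1 (coords t0 r th ph) 0 * r^2 = (\<alpha> ph + \<beta> ph * (cos th)^2) * inv_poly cs r"
      if "r > rplus m q" "0 < th" "th < pi" for r th ph
    proof -
      have "- jRN m q X X xi1 (coords t0 r th ph) 0 * r^2 =
          ((X (coords t0 r th ph) 2)^2 + (sin th)^2 * (X (coords t0 r th ph) 3)^2) * inv_poly cs r"
        unfolding cs_def by (rule flux_density_tangent[OF that assms(1,2)])
      then show ?thesis
        by (simp only: angular[OF that(2,3)])
    qed
  qed
  also have "\<dots> = 8 * pi / 27 * rplus m q * (13 - 16 * m / rplus m q + 16 * m^2 / (rplus m q)^2)"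
  proof -
    have "q^4 = (q^2)^2"
      by simp
    then show ?thesis
      unfolding cs_def assms(7) using rplus_pos
      by (simp add: field_simps horizon_charge) (simp add: algebra_simps power2_eq_square eval_nat_numeral)
  qed
  finally show ?thesis .
qed

lemma flux_xi2:
  "Qflux m q t0 (jRN m q xi2 xi2 xi1)
     = 8 * pi / 27 * rplus m q * (13 - 16 * m / rplus m q + 16 * m^2 / (rplus m q)^2)"
proof (rule flux_tangent[where \<alpha> = "\<lambda>ph. (sin ph)^2" and \<beta> = "\<lambda>ph. (cos ph)^2"
      and \<Phi> = "\<lambda>x. 4 * x / 3 - 2 / 3 * sin x * cos x"])
  show "(xi2 (coords t0 r th ph) 2)^2 + (sin th)^2 * (xi2 (coords t0 r th ph) 3)^2
      = (sin ph)^2 + (cos ph)^2 * (cos th)^2" if "0 < th" "th < pi" for r th ph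
    using sin_gt_zero[OF that] by (simp add: xi2_def cot_def field_simps)
  have "((\<lambda>x. 4 * x / 3 - 2 / 3 * sin x * cos x) has_real_derivative
      4 / 3 - 2 / 3 * ((cos x)^2 - (sin x)^2)) (at x)" for x
    by (auto intro!: derivative_eq_intros simp: power2_eq_square field_simps)
  then show "((\<lambda>x. 4 * x / 3 - 2 / 3 * sin x * cos x) has_real_derivative
      2 * (sin x)^2 + 2 / 3 * (cos x)^2) (at x)" for x
    by (simp add: cos_squared_eq field_simps)
qed (simp_all add: xi2_def continuous_intros)

lemma flux_xi3:
  "Qflux m q t0 (jRN m q xi3 xi3 xi1)
     = 8 * pi / 27 * rplus m q * (13 - 16 * m / rplus m q + 16 * m^2 / (rplus m q)^2)"
proof (rule flux_tangent[where \<alpha> = "\<lambda>ph. (cos ph)^2" and \<beta> = "\<lambda>ph. (sin ph)^2"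
      and \<Phi> = "\<lambda>x. 4 * x / 3 + 2 / 3 * sin x * cos x"])
  show "(xi3 (coords t0 r th ph) 2)^2 + (sin th)^2 * (xi3 (coords t0 r th ph) 3)^2
      = (cos ph)^2 + (sin ph)^2 * (cos th)^2" if "0 < th" "th < pi" for r th ph
    using sin_gt_zero[OF that] by (simp add: xi3_def cot_def field_simps)
  have "((\<lambda>x. 4 * x / 3 + 2 / 3 * sin x * cos x) has_real_derivative
      4 / 3 + 2 / 3 * ((cos x)^2 - (sin x)^2)) (at x)" for x
    by (auto intro!: derivative_eq_intros simp: power2_eq_square field_simps)
  then show "((\<lambda>x. 4 * x / 3 + 2 / 3 * sin x * cos x) has_real_derivative
      2 * (cos x)^2 + 2 / 3 * (sin x)^2) (at x)" for x
    by (simp add: cos_squared_eq field_simps)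
qed (simp_all add: xi3_def continuous_intros)

lemma flux_xi4:
  "Qflux m q t0 (jRN m q xi4 xi4 xi1)
     = 8 * pi / 27 * rplus m q * (13 - 16 * m / rplus m q + 16 * m^2 / (rplus m q)^2)"
proof (rule flux_tangent[where \<alpha> = "\<lambda>_. 1" and \<beta> = "\<lambda>_. - 1" and \<Phi> = "\<lambda>x. 4 * x / 3"])
  show "((\<lambda>x. 4 * x / 3) has_real_derivative 2 * 1 + 2 / 3 * - 1) (at x)" for x
    by (auto intro!: derivative_eq_intros)
qed (simp_all add: xi4_def sin_squared_eq)

end

theorem mainTheorem8:
  fixes m q t0 :: real
  assumes "m > 0" and "m^2 \<ge> q^2"
  shows "Qflux m q t0 (jRN m q xi1 xi1 xi1)
           = 4 * pi / (15 * rplus m q) * (6 - 14 * m / rplus m q + 14 * m^2 / (rplus m q)^2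
                                          - 5 * m^3 / (rplus m q)^3)
       \<and> (\<forall>xa \<in> {xi2, xi3, xi4}. Qflux m q t0 (jRN m q xa xa xi1)
           = 8 * pi / 27 * rplus m q * (13 - 16 * m / rplus m q + 16 * m^2 / (rplus m q)^2))
       \<and> Qflux m q t0 (EMcur m q xi1) = 4 * pi * q^2 / rplus m q
       \<and> (q = 0 \<longrightarrow> Qflux m q t0 (jRN m q xi1 xi1 xi1) = pi / (4 * m)
                  \<and> (\<forall>xa \<in> {xi2, xi3, xi4}. Qflux m q t0 (jRN m q xa xa xi1) = 16 * pi * m / 3))"
proof -
  interpret rn_exterior m q
    using assms by unfold_locales
  have schwarzschild: "rplus m q = 2 * m" if "q = 0"
    unfolding rplus_def using that assms(1) by simp
  show ?thesis
    using flux_xi1 flux_xi2 flux_xi3 flux_xi4 flux_EM schwarzschild assms(1)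
    by (auto simp: field_simps eval_nat_numeral)
qed

end
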